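(* Let $\Sigma$ be an $\mathcal{F}$-transversal curve in a foliated symplectic surface $(S,\Omega_S,\mathcal{F})$ and $r_\alpha$ one of its ramification points. Then there exists an $(\mathcal{F},\Omega_S)$-chart $(U_\alpha,x_\alpha,y_\alpha)$ containing $r_\alpha$ such that, in terms of the standard local coordinate $z_\alpha=\sqrt{x_\alpha-x_\alpha(r_\alpha)}$ on $\Sigma\cap U_\alpha$, $\Sigma\cap U_\alpha$ is parametrized as $(x_\alpha,y_\alpha)=(z_\alpha^2,z_\alpha)$. Such a chart (as a germ of coordinates at $r_\alpha$) is unique up to the $\mathbb{Z}_3$-action $(x,y)\mapsto(\xi^2x,\xi y)$ with $\xi^3=1$.
   Context: A foliated symplectic surface $(S,\Omega_S,\mathcal{F})$: complex surface with closed non-degenerate holomorphic 2-form $\Omega_S$ and holomorphic foliation $\mathcal{F}$ by curves. An $(\mathcal{F},\Omega_S)$-chart is $(U,x,y)$ with $\Omega_S|_U=dx\wedge dy$ and leaves $\{x=\text{const}\}$. A smooth compact curve $\Sigma\subset S$ is $\mathcal{F}$-transversal if it is tangent to leaves of $\mathcal{F}$ at finitely many points (the ramification points), with tangency order $1$ at each; in an $(\mathcal{F},\Omega_S)$-chart around a ramification point $r_\alpha$, $z_\alpha=\sqrt{x_\alpha-x_\alpha(r_\alpha)}$ is a local coordinate on $\Sigma$ near $r_\alpha$ and $\Sigma$ is parametrized as $x_\alpha=x_\alpha(r_\alpha)+z_\alpha^2$, $y_\alpha=\sum_{k\ge0}b_kz_\alpha^k$ with $b_1\ne0$. *)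

theory Defs
  imports "HOL-Analysis.Analysis"
begin

text \<open>Local model: a neighbourhood of the ramification point in S is identified,
via a given (F,Omega)-chart, with an open set U0 of C x C carrying Omega = dx/\dy
and the foliation by vertical lines {x = const}.\<close>

definition holo2 :: "(complex \<times> complex \<Rightarrow> complex) \<Rightarrow> (complex \<times> complex) set \<Rightarrow> bool" where
  "holo2 f V \<longleftrightarrow> open V \<and>
     (\<forall>p\<in>V. \<exists>D. (f has_derivative D) (at p) \<and>
        (\<forall>(a::complex) v. D (a * fst v, a * snd v) = a * D v))"

definition pd1 :: "(complex \<times> complex \<Rightarrow> complex) \<Rightarrow> complex \<times> complex \<Rightarrow> complex" where
  "pd1 f p = frechet_derivative f (at p) (1, 0)"

definition pd2 :: "(complex \<times> complex \<Rightarrow> complex) \<Rightarrow> complex \<times> complex \<Rightarrow> complex" where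
  "pd2 f p = frechet_derivative f (at p) (0, 1)"

text \<open>(F,Omega)-chart (V, X, Y) with (X,Y) = phi: holomorphic coordinates,
leaves {x = const} are sent into {X = const} (dX/dy = 0), and dX/\dY = dx/\dy
(Jacobian determinant 1).\<close>
definition FO_chart :: "(complex \<times> complex) set \<Rightarrow> (complex \<times> complex \<Rightarrow> complex \<times> complex) \<Rightarrow> bool" where
  "FO_chart V \<phi> \<longleftrightarrow> open V \<and> holo2 (fst \<circ> \<phi>) V \<and> holo2 (snd \<circ> \<phi>) V \<and>
     inj_on \<phi> V \<and> open (\<phi> ` V) \<and>
     (\<forall>p\<in>V. pd2 (fst \<circ> \<phi>) p = 0 \<and>
        pd1 (fst \<circ> \<phi>) p * pd2 (snd \<circ> \<phi>) p - pd2 (fst \<circ> \<phi>) p * pd1 (snd \<circ> \<phi>) p = 1)"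

text \<open>Normal-form chart at r: an (F,Omega)-chart inside U0 containing r, with
phi r = (0,0) and Sigma \<inter> V = {X = Y^2}, i.e. Sigma is parametrized as (z^2, z)
with z = Y = sqrt(X - X(r)).\<close>
definition normal_chart ::
  "(complex \<times> complex) set \<Rightarrow> (complex \<times> complex) set \<Rightarrow> complex \<times> complex \<Rightarrow>
   (complex \<times> complex) set \<Rightarrow> (complex \<times> complex \<Rightarrow> complex \<times> complex) \<Rightarrow> bool" where
  "normal_chart U0 \<Sigma> r V \<phi> \<longleftrightarrow> V \<subseteq> U0 \<and> r \<in> V \<and> FO_chart V \<phi> \<and> \<phi> r = (0, 0) \<and>
     (\<forall>p\<in>V. p \<in> \<Sigma> \<longleftrightarrow> fst (\<phi> p) = (snd (\<phi> p))^2)"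

end

(* In the given chart the curve is {(x0 + z^2, beta z)}. Every (F,Omega)-chart is locally a shear
   X = F x, Y = y / F' x + G x. Writing beta z = e (z^2) + z d (z^2) and t = x - x0, the shear maps
   the curve onto {X = Y^2} exactly when F F'^2 = t d^2 and G = - e / F'; this ODE has a local
   biholomorphic solution with F 0 = 0, obtained from a primitive and a cube root.
   Conversely, in a normal chart the coordinate Y(z) of the curve point is odd and satisfies
   Y^2 Y' = z (beta z - beta (-z)) / 2, so two normal charts have the same Y^3 along the curve.
   Hence Y2 = xi Y1 with xi^3 = 1, which forces X2 = xi^2 X1 and Y2 = xi Y1. *)

theory Submission
  imports Defs "HOL-Complex_Analysis.Complex_Analysis"
begin

section \<open>Holomorphic functions of one variable\<close>

lemma continuous_at_eq_of_punctured_ball: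
  fixes f :: "'a::{perfect_space,metric_space} \<Rightarrow> 'b::t2_space"
  assumes "isCont f a" "R > 0" "\<And>z. z \<in> ball a R \<Longrightarrow> z \<noteq> a \<Longrightarrow> f z = c"
  shows "f a = c"
proof -
  have "eventually (\<lambda>z. f z = c) (at a)"
    unfolding eventually_at using assms(2,3) by (auto simp: dist_commute intro!: exI[of _ R])
  then have "(f \<longlongrightarrow> c) (at a)" by (rule tendsto_eventually)
  with assms(1) show ?thesis
    unfolding isCont_def using tendsto_unique trivial_limit_at by blast
qed

lemma eventually_nonzero_at_of_deriv:
  assumes "(f has_field_derivative D) (at a)" "f a = 0" "D \<noteq> 0"
  shows "eventually (\<lambda>z. f z \<noteq> 0) (at a)"
proof -
  have "((\<lambda>z. f z / (z - a)) \<longlongrightarrow> D) (at a)"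
    using assms(1,2) unfolding has_field_derivative_iff by simp
  then have "eventually (\<lambda>z. f z / (z - a) \<noteq> 0) (at a)"
    using tendsto_imp_eventually_ne assms(3) by blast
  then show ?thesis by (rule eventually_mono) auto
qed

lemma isCont_centre_of_holomorphic_on_ball:
  "f holomorphic_on ball a R \<Longrightarrow> R > 0 \<Longrightarrow> isCont f a"
  by (meson centre_in_ball continuous_on_eq_continuous_at holomorphic_on_imp_continuous_on open_ball)

lemma holomorphic_factor_linear:
  assumes "f holomorphic_on S" "open S" "a \<in> S" "f a = 0"
  obtains h where "h holomorphic_on S" "\<And>z. f z = (z - a) * h z" "h a = deriv f a"
proof
  let ?h = "\<lambda>z. if z = a then deriv f a else (f z - f a) / (z - a)"
  show "?h holomorphic_on S"
    by (rule pole_lemma[OF assms(1)]) (use assms(2,3) in \<open>simp add: interior_open\<close>)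
  show "f z = (z - a) * ?h z" for z using assms(4) by simp
qed simp

lemma holomorphic_nth_root_local:
  assumes "f holomorphic_on S" "open S" "a \<in> S" "f a \<noteq> 0" "n > 0"
  obtains \<delta> u where "\<delta> > 0" "ball a \<delta> \<subseteq> S" "u holomorphic_on ball a \<delta>"
    "\<And>z. z \<in> ball a \<delta> \<Longrightarrow> u z ^ n = f z"
proof -
  have "continuous_on S f" using assms(1) holomorphic_on_imp_continuous_on by blast
  then have "open (S \<inter> f -` ball (f a) (norm (f a)))"
    using continuous_open_preimage assms(2) open_ball by blast
  moreover have "a \<in> S \<inter> f -` ball (f a) (norm (f a))" using assms(3,4) by simp
  ultimately obtain \<delta> where \<delta>: "\<delta> > 0" "ball a \<delta> \<subseteq> S \<inter> f -` ball (f a) (norm (f a))"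
    by (meson openE)
  define c where "c = exp (Ln (f a) / n)"
  define u where "u z = c * exp (Ln (f z / f a) / n)" for z
  have quot: "f z / f a \<notin> \<real>\<^sub>\<le>\<^sub>0" if "z \<in> ball a \<delta>" for z
  proof -
    have "norm (f z / f a - 1) < 1"
      using \<delta>(2) that assms(4) by (auto simp: dist_norm norm_minus_commute norm_divide field_simps)
    then have "Re (f z / f a) > 0"
      using abs_Re_le_cmod[of "f z / f a - 1"] by simp
    then show ?thesis by (auto simp: complex_nonpos_Reals_iff)
  qed
  show ?thesis
  proof
    show "\<delta> > 0" "ball a \<delta> \<subseteq> S" using \<delta> by auto
    have "f holomorphic_on ball a \<delta>" using assms(1) \<delta>(2) holomorphic_on_subset by blast
    then show "u holomorphic_on ball a \<delta>"
      unfolding u_def using quot assms(4) by (intro holomorphic_intros) auto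
    fix z assume z: "z \<in> ball a \<delta>"
    have root: "exp (w / of_nat n) ^ n = exp w" for w :: complex
      using assms(5) by (simp add: exp_of_nat_mult[symmetric])
    have "f z / f a \<noteq> 0" using quot[OF z] by auto
    then have "u z ^ n = f a * (f z / f a)"
      using assms(4) by (simp add: u_def c_def power_mult_distrib root)
    also have "\<dots> = f z" using assms(4) by simp
    finally show "u z ^ n = f z" .
  qed
qed

lemma even_holomorphic_eq_comp_power2:
  fixes f :: "complex \<Rightarrow> complex"
  assumes hf: "f holomorphic_on ball 0 R" and R: "R > 0"
    and even: "\<And>z. z \<in> ball 0 R \<Longrightarrow> f (-z) = f z"
  obtains g where "g holomorphic_on ball 0 (R\<^sup>2)" "\<And>z. z \<in> ball 0 R \<Longrightarrow> f z = g (z\<^sup>2)"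
proof
  define g where "g t = f (csqrt t)" for t
  have root_in_ball: "w \<in> ball 0 R" if "w\<^sup>2 \<in> ball 0 (R\<^sup>2)" for w :: complex
    using that R power_less_imp_less_base[of "norm w" 2 R] by (simp add: norm_power)
  have same_square: "f w = f w'" if "w \<in> ball 0 R" "w' \<in> ball 0 R" "w\<^sup>2 = w'\<^sup>2" for w w'
    using that even by (auto simp: power2_eq_iff)
  show g_square: "f z = g (z\<^sup>2)" if "z \<in> ball 0 R" for z
    unfolding g_def by (rule same_square) (use that in \<open>auto simp: norm_power\<close>)
  show "g holomorphic_on ball 0 (R\<^sup>2)"
  proof (rule no_isolated_singularity'[of "{0}"])
    have "((\<lambda>t. norm (csqrt t)) \<longlongrightarrow> 0) (at (0::complex))"
      unfolding norm_csqrt by (auto intro!: tendsto_eq_intros)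
    then have "(csqrt \<longlongrightarrow> 0) (at 0)" by (rule tendsto_norm_zero_cancel)
    moreover have "isCont f 0" using hf R by (rule isCont_centre_of_holomorphic_on_ball)
    ultimately have "(g \<longlongrightarrow> g 0) (at 0)"
      unfolding g_def using isCont_tendsto_compose by fastforce
    then show "(g \<longlongrightarrow> g k) (at k within ball 0 (R\<^sup>2))" if "k \<in> {0}" for k
      using that tendsto_within_subset by fastforce
    show "g holomorphic_on ball 0 (R\<^sup>2) - {0}"
      unfolding holomorphic_on_def
    proof
      fix t :: complex assume t: "t \<in> ball 0 (R\<^sup>2) - {0}"
      obtain \<delta> s where \<delta>: "\<delta> > 0" "ball t \<delta> \<subseteq> ball 0 (R\<^sup>2) - {0}"
        and hs: "s holomorphic_on ball t \<delta>" and s_square: "\<And>w. w \<in> ball t \<delta> \<Longrightarrow> s w ^ 2 = w"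
        by (rule holomorphic_nth_root_local[of "\<lambda>w. w" "ball 0 (R\<^sup>2) - {0}" t 2])
           (use t in auto)
      have s_ball: "s w \<in> ball 0 R" if "w \<in> ball t \<delta>" for w
        using root_in_ball s_square[OF that] \<delta>(2) that by auto
      have "(f \<circ> s) holomorphic_on ball t \<delta>"
        by (rule holomorphic_on_compose_gen[OF hs hf]) (use s_ball in auto)
      moreover have "(f \<circ> s) w = g w" if "w \<in> ball t \<delta>" for w
        using g_square[OF s_ball[OF that]] s_square[OF that] by simp
      ultimately have "g holomorphic_on ball t \<delta>" using holomorphic_cong by blast
      then have "g field_differentiable at t"
        using \<delta>(1) holomorphic_on_imp_differentiable_at by auto
      then show "g field_differentiable at t within ball 0 (R\<^sup>2) - {0}"
        by (rule field_differentiable_at_within)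
    qed
  qed auto
qed

lemma odd_holomorphic_eq_mult_comp_power2:
  fixes f :: "complex \<Rightarrow> complex"
  assumes hf: "f holomorphic_on ball 0 R" and R: "R > 0"
    and odd: "\<And>z. z \<in> ball 0 R \<Longrightarrow> f (-z) = - f z"
  obtains g where "g holomorphic_on ball 0 (R\<^sup>2)" "\<And>z. z \<in> ball 0 R \<Longrightarrow> f z = z * g (z\<^sup>2)"
    "g 0 = deriv f 0"
proof -
  have "f 0 = 0" using odd[of 0] R by simp
  then obtain h where hh: "h holomorphic_on ball 0 R" and fh: "\<And>z. f z = z * h z"
    and h0: "h 0 = deriv f 0"
    using holomorphic_factor_linear[OF hf open_ball, of 0] R by auto
  have "h (-z) = h z" if "z \<in> ball 0 R" for z
  proof (cases "z = 0")
    case False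
    then show ?thesis using odd[OF that] fh[of z] fh[of "-z"] by simp
  qed simp
  then obtain g where "g holomorphic_on ball 0 (R\<^sup>2)" "\<And>z. z \<in> ball 0 R \<Longrightarrow> h z = g (z\<^sup>2)"
    using even_holomorphic_eq_comp_power2[OF hh R] by blast
  moreover have "g 0 = h 0" using calculation(2)[of 0] R by simp
  ultimately show ?thesis using that fh h0 by auto
qed

lemma holomorphic_on_reflect:
  "f holomorphic_on ball 0 R \<Longrightarrow> (\<lambda>z. f (- z)) holomorphic_on ball (0::complex) R"
proof -
  assume "f holomorphic_on ball 0 R"
  moreover have "uminus holomorphic_on ball (0::complex) R" "uminus ` ball (0::complex) R \<subseteq> ball 0 R"
    by (auto intro: holomorphic_intros)
  ultimately show ?thesis using holomorphic_on_compose_gen[of uminus] by (simp add: o_def)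
qed

lemma holomorphic_even_odd_decomposition:
  fixes f :: "complex \<Rightarrow> complex"
  assumes hf: "f holomorphic_on ball 0 R" and R: "R > 0"
  obtains g h where "g holomorphic_on ball 0 (R\<^sup>2)" "h holomorphic_on ball 0 (R\<^sup>2)"
    "\<And>z. z \<in> ball 0 R \<Longrightarrow> f z = g (z\<^sup>2) + z * h (z\<^sup>2)" "h 0 = deriv f 0"
proof -
  define Ev where "Ev z = (f z + f (-z)) / 2" for z
  define Od where "Od z = (f z - f (-z)) / 2" for z
  have hEv: "Ev holomorphic_on ball 0 R" and hOd: "Od holomorphic_on ball 0 R"
    unfolding Ev_def Od_def using hf holomorphic_on_reflect[OF hf] by (auto intro!: holomorphic_intros)
  obtain g where g: "g holomorphic_on ball 0 (R\<^sup>2)" "\<And>z. z \<in> ball 0 R \<Longrightarrow> Ev z = g (z\<^sup>2)"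
    by (rule even_holomorphic_eq_comp_power2[OF hEv R]) (auto simp: Ev_def)
  obtain h where h: "h holomorphic_on ball 0 (R\<^sup>2)" "\<And>z. z \<in> ball 0 R \<Longrightarrow> Od z = z * h (z\<^sup>2)"
    "h 0 = deriv Od 0"
    by (rule odd_holomorphic_eq_mult_comp_power2[OF hOd R]) (auto simp: Od_def diff_divide_distrib)
  have "(f has_field_derivative deriv f 0) (at 0)"
    using holomorphic_derivI[OF hf open_ball] R by simp
  then have "(Od has_field_derivative (deriv f 0 + deriv f 0) / 2) (at 0)"
    unfolding Od_def by (auto intro!: derivative_eq_intros DERIV_chain2[of f])
  then have "deriv Od 0 = deriv f 0" by (simp add: DERIV_imp_deriv)
  moreover have "f z = Ev z + Od z" for z by (simp add: Ev_def Od_def field_simps)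
  ultimately show ?thesis using that g h by auto
qed

lemma holomorphic_odd_primitive:
  fixes k :: "complex \<Rightarrow> complex"
  assumes hk: "k holomorphic_on ball 0 R" and even: "\<And>z. z \<in> ball 0 R \<Longrightarrow> k (-z) = k z"
  obtains Q where "\<And>z. z \<in> ball 0 R \<Longrightarrow> (Q has_field_derivative k z) (at z)"
    "\<And>z. z \<in> ball 0 R \<Longrightarrow> Q (-z) = - Q z"
proof -
  obtain Q1 where Q1: "\<And>z. z \<in> ball 0 R \<Longrightarrow> (Q1 has_field_derivative k z) (at z within ball 0 R)"
    using holomorphic_convex_primitive[of "ball 0 R" "{}" k] hk
    by (auto simp: holomorphic_on_imp_continuous_on holomorphic_on_imp_differentiable_at)
  define Q where "Q z = Q1 z - Q1 0" for z
  have dQ: "(Q has_field_derivative k z) (at z)" if "z \<in> ball 0 R" for z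
    using Q1[OF that] at_within_open[OF that open_ball] unfolding Q_def
    by (auto intro!: derivative_eq_intros)
  have "\<exists>c. \<forall>z\<in>ball 0 R. Q z + Q (-z) = c"
  proof (rule has_field_derivative_zero_constant)
    fix z assume z: "z \<in> ball (0::complex) R"
    then have "-z \<in> ball 0 R" by simp
    from dQ[OF z] dQ[OF this]
    have "((\<lambda>z. Q z + Q (-z)) has_field_derivative k z - k (-z)) (at z)"
      by (auto intro!: derivative_eq_intros DERIV_chain2[of Q])
    then show "((\<lambda>z. Q z + Q (-z)) has_field_derivative 0) (at z within ball 0 R)"
      by (simp add: even[OF z] has_field_derivative_at_within)
  qed simp
  then obtain c where c: "\<And>z. z \<in> ball 0 R \<Longrightarrow> Q z + Q (-z) = c" by blast
  have "Q (-z) = - Q z" if "z \<in> ball 0 R" for z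
  proof -
    have "0 \<in> ball (0::complex) R" using that norm_ge_zero[of z] by (simp, linarith)
    then have "c = 0" using c[of 0] by (simp add: Q_def)
    then show ?thesis using c[OF that] by (simp add: add_eq_0_iff)
  qed
  with dQ show ?thesis using that by blast
qed

(* The ODE says (t^(3/2) p)' = (3/2) t^(1/2) q: with t = z^2, the function z^3 p(z^2) is the odd
   primitive of 3 z^2 q(z^2). *)
lemma euler_ode_holomorphic_solution:
  fixes q :: "complex \<Rightarrow> complex"
  assumes hq: "q holomorphic_on ball 0 (R\<^sup>2)" and R: "R > 0"
  obtains p where "p holomorphic_on ball 0 (R\<^sup>2)"
    "\<And>t. t \<in> ball 0 (R\<^sup>2) \<Longrightarrow> 3 * p t + 2 * t * deriv p t = 3 * q t"
proof -
  have square_in_ball: "z\<^sup>2 \<in> ball 0 (R\<^sup>2)" if "z \<in> ball 0 R" for z :: complex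
    using that by (simp add: norm_power power_strict_mono)
  define k where "k z = 3 * z\<^sup>2 * q (z\<^sup>2)" for z
  have "(q \<circ> (\<lambda>z. z\<^sup>2)) holomorphic_on ball 0 R"
    by (rule holomorphic_on_compose_gen[OF _ hq]) (use square_in_ball in \<open>auto intro: holomorphic_intros\<close>)
  then have "k holomorphic_on ball 0 R" unfolding k_def by (auto intro!: holomorphic_intros simp: o_def)
  then obtain Q where dQ: "\<And>z. z \<in> ball 0 R \<Longrightarrow> (Q has_field_derivative k z) (at z)"
    and Q_odd: "\<And>z. z \<in> ball 0 R \<Longrightarrow> Q (-z) = - Q z"
    by (rule holomorphic_odd_primitive) (simp add: k_def, rule that)
  have hQ: "Q holomorphic_on ball 0 R" using dQ holomorphic_on_open[OF open_ball] by blast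
  obtain g where hg: "g holomorphic_on ball 0 (R\<^sup>2)" and Qg: "\<And>z. z \<in> ball 0 R \<Longrightarrow> Q z = z * g (z\<^sup>2)"
    and g0: "g 0 = deriv Q 0"
    using odd_holomorphic_eq_mult_comp_power2[OF hQ R Q_odd] by blast
  have "g 0 = 0" using g0 dQ[of 0] R by (simp add: DERIV_imp_deriv k_def)
  then obtain p where hp: "p holomorphic_on ball 0 (R\<^sup>2)" and gp: "\<And>t. g t = t * p t"
    using holomorphic_factor_linear[OF hg open_ball, of 0] R by auto
  have ode_z: "3 * z\<^sup>2 * p (z\<^sup>2) + 2 * z ^ 4 * deriv p (z\<^sup>2) = k z" if z: "z \<in> ball 0 R" for z
  proof -
    have "((\<lambda>z. z ^ 3 * p (z\<^sup>2)) has_field_derivative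
        3 * z\<^sup>2 * p (z\<^sup>2) + 2 * z ^ 4 * deriv p (z\<^sup>2)) (at z)"
      using holomorphic_derivI[OF hp open_ball square_in_ball[OF z], of UNIV]
      by (auto intro!: derivative_eq_intros DERIV_chain2[of p] simp: algebra_simps eval_nat_numeral)
    then have "(Q has_field_derivative 3 * z\<^sup>2 * p (z\<^sup>2) + 2 * z ^ 4 * deriv p (z\<^sup>2)) (at z)"
      by (rule has_field_derivative_transform_within_open[OF _ open_ball z])
         (simp add: Qg gp eval_nat_numeral)
    then show ?thesis using dQ[OF z] DERIV_unique by blast
  qed
  have ode_off_0: "3 * p t + 2 * t * deriv p t = 3 * q t" if t: "t \<in> ball 0 (R\<^sup>2)" "t \<noteq> 0" for t
  proof -
    define z where "z = csqrt t"
    have z: "z \<in> ball 0 R" "z\<^sup>2 = t" "z \<noteq> 0"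
      using t R by (auto simp: z_def norm_csqrt real_less_lsqrt)
    have "z\<^sup>2 * (3 * p (z\<^sup>2) + 2 * z\<^sup>2 * deriv p (z\<^sup>2)) = z\<^sup>2 * (3 * q (z\<^sup>2))"
      using ode_z[OF z(1)] by (simp add: k_def algebra_simps eval_nat_numeral)
    then show ?thesis using z(2) t(2) by simp
  qed
  have "R\<^sup>2 > 0" using R by simp
  then have "isCont p 0" "isCont (deriv p) 0" "isCont q 0"
    using hp hq holomorphic_deriv[OF hp open_ball] isCont_centre_of_holomorphic_on_ball by blast+
  then have "isCont (\<lambda>t. 3 * p t + 2 * t * deriv p t - 3 * q t) 0" by (intro continuous_intros)
  then have "3 * p 0 + 2 * 0 * deriv p 0 - 3 * q 0 = 0"
    by (rule continuous_at_eq_of_punctured_ball[where R = "R\<^sup>2"]) (use R ode_off_0 in auto)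
  then show ?thesis using that[OF hp] ode_off_0 by (metis eq_iff_diff_eq_0)
qed

lemma deriv_square_eq_of_square_eq_comp_power2:
  fixes Y H :: "complex \<Rightarrow> complex"
  assumes dY: "(Y has_field_derivative Y') (at 0)" and Y0: "Y 0 = 0"
    and dH: "(H has_field_derivative H') (at 0)" and H0: "H 0 = 0"
    and eq: "eventually (\<lambda>z. Y z ^ 2 = H (z\<^sup>2)) (at 0)"
  shows "Y'\<^sup>2 = H'"
proof -
  have "((\<lambda>z. Y z / z) \<longlongrightarrow> Y') (at 0)"
    using dY Y0 unfolding has_field_derivative_iff by simp
  then have lim_Y: "((\<lambda>z. (Y z / z)\<^sup>2) \<longlongrightarrow> Y'\<^sup>2) (at 0)" by (rule tendsto_power)
  have "((\<lambda>t. H t / t) \<longlongrightarrow> H') (at 0)"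
    using dH H0 unfolding has_field_derivative_iff by simp
  moreover have "filterlim (\<lambda>z::complex. z\<^sup>2) (at 0) (at 0)"
    by (rule filterlim_atI) (auto intro!: tendsto_eq_intros simp: eventually_at_filter)
  ultimately have "((\<lambda>z. H (z\<^sup>2) / z\<^sup>2) \<longlongrightarrow> H') (at 0)"
    by (rule filterlim_compose)
  moreover have "eventually (\<lambda>z. (Y z / z)\<^sup>2 = H (z\<^sup>2) / z\<^sup>2) (at 0)"
    using eq by eventually_elim (simp add: power_divide)
  ultimately have "((\<lambda>z. (Y z / z)\<^sup>2) \<longlongrightarrow> H') (at 0)"
    using Lim_transform_eventually eventually_mono by fastforce
  with lim_Y show ?thesis using tendsto_unique trivial_limit_at by blast
qed

lemma odd_near_0_of_square_even:
  fixes Y :: "complex \<Rightarrow> complex"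
  assumes dY: "(Y has_field_derivative Y') (at 0)" and "Y' \<noteq> 0" and "Y 0 = 0" and "R > 0"
    and sq: "\<And>z. z \<in> ball 0 R \<Longrightarrow> Y (-z) ^ 2 = Y z ^ 2"
  obtains d where "0 < d" "d \<le> R" "\<And>z. z \<in> ball 0 d \<Longrightarrow> Y (-z) = - Y z"
proof -
  have "((\<lambda>z. Y z - Y (-z)) has_field_derivative 2 * Y') (at 0)"
    using dY by (auto intro!: derivative_eq_intros DERIV_chain2[of Y])
  then have "eventually (\<lambda>z. Y z - Y (-z) \<noteq> 0) (at 0)"
    by (rule eventually_nonzero_at_of_deriv) (use assms(2,3) in auto)
  then obtain d where d: "d > 0" "\<And>z. z \<noteq> 0 \<Longrightarrow> dist z 0 < d \<Longrightarrow> Y z \<noteq> Y (-z)"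
    unfolding eventually_at by auto
  show ?thesis
  proof (rule that[of "min d R"])
    fix z :: complex assume z: "z \<in> ball 0 (min d R)"
    show "Y (-z) = - Y z"
    proof (cases "z = 0")
      case False
      then have "Y (-z) \<noteq> Y z" using d(2)[of z] z by (auto simp: dist_norm)
      then show ?thesis using sq[of z] z by (auto simp: power2_eq_iff)
    qed (use \<open>Y 0 = 0\<close> in simp)
  qed (use d \<open>R > 0\<close> in auto)
qed

lemma power_eq_imp_root_of_unity_mult:
  fixes f g :: "'a::topological_space \<Rightarrow> complex"
  assumes "connected S" "S \<noteq> {}" "continuous_on S f" "continuous_on S g" "n > 0"
    and nz: "\<And>z. z \<in> S \<Longrightarrow> f z \<noteq> 0" and pow: "\<And>z. z \<in> S \<Longrightarrow> g z ^ n = f z ^ n"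
  obtains \<xi> where "\<xi> ^ n = 1" "\<And>z. z \<in> S \<Longrightarrow> g z = \<xi> * f z"
proof -
  define h where "h z = g z / f z" for z
  have root: "h z ^ n = 1" if "z \<in> S" for z
    using pow[OF that] nz[OF that] by (simp add: h_def power_divide)
  have "continuous_on S h" unfolding h_def using assms(3,4) nz by (intro continuous_intros) auto
  moreover have "finite {w::complex. w ^ n = 1}" using assms(5) by (intro finite_roots_unity) simp
  then have "finite (h ` S)" by (rule finite_subset[rotated]) (use root in auto)
  ultimately have "h constant_on S" using continuous_finite_range_constant assms(1) by blast
  then obtain \<xi> where "\<And>z. z \<in> S \<Longrightarrow> h z = \<xi>" unfolding constant_on_def by blast
  then show ?thesis
    using that assms(2) root nz by (force simp: h_def field_simps)
qed

lemma holomorphic_locally_injective_nonzero_deriv: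
  assumes hF: "F holomorphic_on ball a \<delta>" and "\<delta> > 0" and dF: "deriv F a \<noteq> 0"
  obtains \<eta> where "0 < \<eta>" "\<eta> \<le> \<delta>" "inj_on F (ball a \<eta>)" "\<And>t. t \<in> ball a \<eta> \<Longrightarrow> deriv F t \<noteq> 0"
proof -
  have "isCont (deriv F) a"
    using holomorphic_deriv[OF hF open_ball] \<open>\<delta> > 0\<close> by (rule isCont_centre_of_holomorphic_on_ball)
  then have "eventually (\<lambda>t. deriv F t \<noteq> 0) (at a)"
    unfolding isCont_def using dF tendsto_imp_eventually_ne by blast
  then obtain r2 where "r2 > 0" and r2: "\<And>t. t \<noteq> a \<Longrightarrow> dist t a < r2 \<Longrightarrow> deriv F t \<noteq> 0"
    unfolding eventually_at by auto
  have "a \<in> ball a \<delta>" using \<open>\<delta> > 0\<close> by simp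
  then obtain r1 where "r1 > 0" "ball a r1 \<subseteq> ball a \<delta>" "inj_on F (ball a r1)"
    by (rule has_complex_derivative_locally_injective[OF hF _ open_ball dF])
  show ?thesis
  proof (rule that[of "min r1 r2"])
    show "0 < min r1 r2" using \<open>r1 > 0\<close> \<open>r2 > 0\<close> by simp
    then show "min r1 r2 \<le> \<delta>"
      using \<open>ball a r1 \<subseteq> ball a \<delta>\<close> by (auto simp: ball_subset_ball_iff)
    show "inj_on F (ball a (min r1 r2))" using \<open>inj_on F (ball a r1)\<close> by (rule inj_on_subset) auto
    show "deriv F t \<noteq> 0" if "t \<in> ball a (min r1 r2)" for t
      using r2[of t] dF that by (cases "t = a") (auto simp: dist_commute)
  qed
qed

(* With w^3 = p for the solution p of the Euler ODE, F t = t (w t)^2 satisfies q = w F'. *)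
lemma square_ode_local_biholomorphic_solution:
  fixes q :: "complex \<Rightarrow> complex"
  assumes hq: "q holomorphic_on ball 0 (R\<^sup>2)" and R: "R > 0" and q0: "q 0 \<noteq> 0"
  obtains \<eta> F where "\<eta> > 0" "\<eta> \<le> R\<^sup>2" "F holomorphic_on ball 0 \<eta>" "F 0 = 0" "inj_on F (ball 0 \<eta>)"
    "\<And>t. t \<in> ball 0 \<eta> \<Longrightarrow> deriv F t \<noteq> 0"
    "\<And>t. t \<in> ball 0 \<eta> \<Longrightarrow> F t * (deriv F t)\<^sup>2 = t * (q t)\<^sup>2"
proof -
  obtain p where hp: "p holomorphic_on ball 0 (R\<^sup>2)"
    and ode: "\<And>t. t \<in> ball 0 (R\<^sup>2) \<Longrightarrow> 3 * p t + 2 * t * deriv p t = 3 * q t"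
    using euler_ode_holomorphic_solution[OF hq R] by blast
  have p0: "p 0 \<noteq> 0" using ode[of 0] R q0 by simp
  have 0: "0 \<in> ball (0::complex) (R\<^sup>2)" using R by simp
  obtain \<delta> w where \<delta>: "\<delta> > 0" "ball (0::complex) \<delta> \<subseteq> ball 0 (R\<^sup>2)" and hw: "w holomorphic_on ball 0 \<delta>"
    and w_cube: "\<And>t. t \<in> ball 0 \<delta> \<Longrightarrow> w t ^ 3 = p t"
    by (rule holomorphic_nth_root_local[OF hp open_ball 0 p0, where n=3]) (simp, rule that)
  have dw: "(w has_field_derivative deriv w t) (at t)" if "t \<in> ball 0 \<delta>" for t
    using holomorphic_derivI[OF hw open_ball that] .
  define F where "F t = t * (w t)\<^sup>2" for t
  have hF: "F holomorphic_on ball 0 \<delta>" unfolding F_def using hw by (intro holomorphic_intros)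
  have dF: "deriv F t = (w t)\<^sup>2 + 2 * t * w t * deriv w t" if "t \<in> ball 0 \<delta>" for t
    unfolding F_def using dw[OF that] by (intro DERIV_imp_deriv) (auto intro!: derivative_eq_intros)
  have dp: "deriv p t = 3 * (w t)\<^sup>2 * deriv w t" if t: "t \<in> ball 0 \<delta>" for t
  proof (rule DERIV_imp_deriv)
    have "((\<lambda>t. w t ^ 3) has_field_derivative 3 * (w t)\<^sup>2 * deriv w t) (at t)"
      using dw[OF t] by (auto intro!: derivative_eq_intros)
    then show "(p has_field_derivative 3 * (w t)\<^sup>2 * deriv w t) (at t)"
      by (rule has_field_derivative_transform_within_open[OF _ open_ball t]) (simp add: w_cube)
  qed
  have F_ode: "F t * (deriv F t)\<^sup>2 = t * (q t)\<^sup>2" if t: "t \<in> ball 0 \<delta>" for t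
  proof -
    have "t \<in> ball 0 (R\<^sup>2)" using t \<delta>(2) by blast
    then have "3 * q t = 3 * p t + 2 * t * deriv p t" using ode by simp
    also have "\<dots> = 3 * (w t * deriv F t)"
      using w_cube[OF t] dp[OF t] dF[OF t] by (simp add: algebra_simps power2_eq_square power3_eq_cube)
    finally have "q t = w t * deriv F t" by simp
    then show ?thesis by (simp add: F_def power2_eq_square algebra_simps)
  qed
  have "deriv F 0 \<noteq> 0" using dF[of 0] w_cube[of 0] p0 \<delta>(1) by auto
  then obtain \<eta> where \<eta>: "0 < \<eta>" "\<eta> \<le> \<delta>" and inj: "inj_on F (ball 0 \<eta>)"
    and dF_\<eta>: "\<And>t. t \<in> ball 0 \<eta> \<Longrightarrow> deriv F t \<noteq> 0"
    by (rule holomorphic_locally_injective_nonzero_deriv[OF hF \<delta>(1)]) (rule that)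
  have ball_\<eta>: "ball (0::complex) \<eta> \<subseteq> ball 0 \<delta>" using \<eta>(2) by auto
  show ?thesis
  proof (rule that[OF \<eta>(1) _ _ _ inj dF_\<eta>])
    show "\<eta> \<le> R\<^sup>2" using ball_\<eta> \<delta>(2) \<eta>(1) by (auto simp: ball_subset_ball_iff)
    show "F holomorphic_on ball 0 \<eta>" using hF ball_\<eta> by (rule holomorphic_on_subset)
    show "F t * (deriv F t)\<^sup>2 = t * (q t)\<^sup>2" if "t \<in> ball 0 \<eta>" for t
      using F_ode ball_\<eta> that by blast
  qed (simp add: F_def)
qed

section \<open>Shear charts along a curve with a simple ramification\<close>

(* The shear (x, y) -> (F x, y / F' x + G x) maps the curve (x0 + z^2, b z) to (Y(z)^2, Y z). *)
definition shear_along_square_curve ::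
  "complex \<Rightarrow> (complex \<Rightarrow> complex) \<Rightarrow> real \<Rightarrow> (complex \<Rightarrow> complex) \<Rightarrow> (complex \<Rightarrow> complex) \<Rightarrow>
   (complex \<Rightarrow> complex) \<Rightarrow> bool" where
  "shear_along_square_curve x0 b \<delta> F G Y \<longleftrightarrow> \<delta> > 0 \<and>
     F holomorphic_on ball x0 (\<delta>\<^sup>2) \<and> (\<forall>x\<in>ball x0 (\<delta>\<^sup>2). deriv F x \<noteq> 0) \<and>
     Y holomorphic_on ball 0 \<delta> \<and> Y 0 = 0 \<and>
     (\<forall>z\<in>ball 0 \<delta>. F (x0 + z\<^sup>2) = (Y z)\<^sup>2 \<and> Y z = b z / deriv F (x0 + z\<^sup>2) + G (x0 + z\<^sup>2))"

lemma shear_along_square_curveD: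
  assumes "shear_along_square_curve x0 b \<delta> F G Y" "z \<in> ball 0 \<delta>"
  shows "F (x0 + z\<^sup>2) = (Y z)\<^sup>2" "Y z = b z / deriv F (x0 + z\<^sup>2) + G (x0 + z\<^sup>2)"
  using assms by (simp_all add: shear_along_square_curve_def)

lemma translate_power2_in_ball:
  "(z::complex) \<in> ball 0 \<delta> \<Longrightarrow> x0 + z\<^sup>2 \<in> ball x0 (\<delta>\<^sup>2)"
  by (simp add: dist_norm norm_power power_strict_mono)

lemma shear_along_square_curve_mono:
  assumes "shear_along_square_curve x0 b \<delta> F G Y" "0 < \<delta>'" "\<delta>' \<le> \<delta>"
  shows "shear_along_square_curve x0 b \<delta>' F G Y"
proof -
  have "\<delta>'\<^sup>2 \<le> \<delta>\<^sup>2" using assms(2,3) by (simp add: power_mono)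
  then have "ball x0 (\<delta>'\<^sup>2) \<subseteq> ball x0 (\<delta>\<^sup>2)" "ball (0::complex) \<delta>' \<subseteq> ball 0 \<delta>"
    using assms(3) by auto
  then show ?thesis
    using assms(1,2) unfolding shear_along_square_curve_def by (auto intro: holomorphic_on_subset)
qed

lemma shear_along_square_curve_deriv:
  assumes S: "shear_along_square_curve x0 b \<delta> F G Y" and z: "z \<in> ball 0 \<delta>"
  shows "deriv F (x0 + z\<^sup>2) * z = Y z * deriv Y z"
proof -
  have hF: "F holomorphic_on ball x0 (\<delta>\<^sup>2)" and hY: "Y holomorphic_on ball 0 \<delta>"
    and X_eq: "\<And>z. z \<in> ball 0 \<delta> \<Longrightarrow> F (x0 + z\<^sup>2) = (Y z)\<^sup>2"
    using S by (auto simp: shear_along_square_curve_def)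
  have "((\<lambda>z. F (x0 + z\<^sup>2)) has_field_derivative deriv F (x0 + z\<^sup>2) * (2 * z)) (at z)"
    using holomorphic_derivI[OF hF open_ball translate_power2_in_ball[OF z], of UNIV]
    by (auto intro!: derivative_eq_intros DERIV_chain2[of F])
  moreover have "((\<lambda>z. F (x0 + z\<^sup>2)) has_field_derivative 2 * Y z * deriv Y z) (at z)"
  proof (rule has_field_derivative_transform_within_open[OF _ open_ball z])
    show "((\<lambda>z. (Y z)\<^sup>2) has_field_derivative 2 * Y z * deriv Y z) (at z)"
      using holomorphic_derivI[OF hY open_ball z, of UNIV] by (auto intro!: derivative_eq_intros)
  qed (simp add: X_eq)
  ultimately show ?thesis using DERIV_unique by fastforce
qed

lemma shear_along_square_curve_odd_part:
  assumes S: "shear_along_square_curve x0 b \<delta> F G Y"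
  obtains d where "0 < d" "d \<le> \<delta>" "deriv Y 0 \<noteq> 0"
    "\<And>z. z \<in> ball 0 d \<Longrightarrow> (Y z)\<^sup>2 * deriv Y z = z * ((b z - b (-z)) / 2)"
proof -
  have \<delta>: "\<delta> > 0" and hF: "F holomorphic_on ball x0 (\<delta>\<^sup>2)"
    and dF: "\<And>x. x \<in> ball x0 (\<delta>\<^sup>2) \<Longrightarrow> deriv F x \<noteq> 0"
    and hY: "Y holomorphic_on ball 0 \<delta>" and Y0: "Y 0 = 0"
    and X_eq: "\<And>z. z \<in> ball 0 \<delta> \<Longrightarrow> F (x0 + z\<^sup>2) = (Y z)\<^sup>2"
    and Y_eq: "\<And>z. z \<in> ball 0 \<delta> \<Longrightarrow> Y z = b z / deriv F (x0 + z\<^sup>2) + G (x0 + z\<^sup>2)"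
    using S by (auto simp: shear_along_square_curve_def)
  have 0: "(0::complex) \<in> ball 0 \<delta>" using \<delta> by simp
  have dY: "(Y has_field_derivative deriv Y 0) (at 0)" using holomorphic_derivI[OF hY open_ball 0] .
  have "(deriv Y 0)\<^sup>2 = deriv F x0"
  proof (rule deriv_square_eq_of_square_eq_comp_power2[OF dY Y0])
    show "((\<lambda>t. F (x0 + t)) has_field_derivative deriv F x0) (at 0)"
      using holomorphic_derivI[OF hF open_ball translate_power2_in_ball[OF 0], of UNIV]
        DERIV_shift[of F _ 0 x0] by (simp add: add.commute)
    show "F (x0 + 0) = 0" using X_eq[OF 0] Y0 by simp
    show "eventually (\<lambda>z. Y z ^ 2 = F (x0 + z\<^sup>2)) (at 0)"
      using eventually_at_in_open'[OF open_ball 0] by eventually_elim (simp add: X_eq)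
  qed
  then have dY0: "deriv Y 0 \<noteq> 0" using dF translate_power2_in_ball[OF 0] by auto
  obtain d where d: "0 < d" "d \<le> \<delta>" and odd: "\<And>z. z \<in> ball 0 d \<Longrightarrow> Y (-z) = - Y z"
    by (rule odd_near_0_of_square_even[OF dY dY0 Y0 \<delta>]) (auto simp: X_eq[symmetric])
  show ?thesis
  proof (rule that[OF d dY0])
    fix z :: complex assume z: "z \<in> ball 0 d"
    then have z\<delta>: "z \<in> ball 0 \<delta>" "-z \<in> ball 0 \<delta>" using d(2) by auto
    have "Y z - Y (-z) = (b z - b (-z)) / deriv F (x0 + z\<^sup>2)"
      using Y_eq[OF z\<delta>(1)] Y_eq[OF z\<delta>(2)] by (simp add: diff_divide_distrib)
    then have "2 * Y z = (b z - b (-z)) / deriv F (x0 + z\<^sup>2)" using odd[OF z] by simp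
    then have "deriv F (x0 + z\<^sup>2) * Y z = (b z - b (-z)) / 2"
      using dF[OF translate_power2_in_ball[OF z\<delta>(1)]] by (simp add: field_simps)
    then show "(Y z)\<^sup>2 * deriv Y z = z * ((b z - b (-z)) / 2)"
      using shear_along_square_curve_deriv[OF S z\<delta>(1)]
      by (metis (no_types, lifting) mult.assoc mult.commute power2_eq_square)
  qed
qed

lemma shear_along_square_curve_transition:
  assumes S1: "shear_along_square_curve x0 b d F1 G1 Y1" and S2: "shear_along_square_curve x0 b d F2 G2 Y2"
    and \<xi>: "\<xi> ^ 3 = 1" and Y21: "\<And>z. z \<in> ball 0 d \<Longrightarrow> Y2 z = \<xi> * Y1 z"
    and x: "x \<in> ball x0 (d\<^sup>2)"
  shows "(F2 x, y / deriv F2 x + G2 x) = (\<xi>\<^sup>2 * F1 x, \<xi> * (y / deriv F1 x + G1 x))"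
proof -
  have hF1: "F1 holomorphic_on ball x0 (d\<^sup>2)" using S1 by (simp add: shear_along_square_curve_def)
  have root: "csqrt (w - x0) \<in> ball 0 d" "x0 + (csqrt (w - x0))\<^sup>2 = w" if "w \<in> ball x0 (d\<^sup>2)" for w
  proof -
    have "d > 0" using S1 by (simp add: shear_along_square_curve_def)
    moreover have "norm (w - x0) < d\<^sup>2" using that by (simp add: dist_norm norm_minus_commute)
    ultimately have "sqrt (norm (w - x0)) < d" using real_sqrt_less_mono by fastforce
    then show "csqrt (w - x0) \<in> ball 0 d" by (simp add: norm_csqrt)
  qed simp
  have FX: "F2 w = \<xi>\<^sup>2 * F1 w" if "w \<in> ball x0 (d\<^sup>2)" for w
    using shear_along_square_curveD(1)[OF S1 root(1)[OF that]] shear_along_square_curveD(1)[OF S2 root(1)[OF that]]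
      Y21[OF root(1)[OF that]] root(2)[OF that]
    by (simp add: power_mult_distrib)
  have "((\<lambda>x. \<xi>\<^sup>2 * F1 x) has_field_derivative \<xi>\<^sup>2 * deriv F1 x) (at x)"
    using holomorphic_derivI[OF hF1 open_ball x, of UNIV] by (auto intro!: derivative_eq_intros)
  then have "(F2 has_field_derivative \<xi>\<^sup>2 * deriv F1 x) (at x)"
    by (rule has_field_derivative_transform_within_open[OF _ open_ball x]) (simp add: FX)
  then have dFX: "deriv F2 x = \<xi>\<^sup>2 * deriv F1 x" by (rule DERIV_imp_deriv)
  have "\<xi> \<noteq> 0" using \<xi> by auto
  then have "1 / \<xi>\<^sup>2 = \<xi>" using \<xi> by (simp add: field_simps power2_eq_square power3_eq_cube mult.assoc)
  then have div_\<xi>: "w / (\<xi>\<^sup>2 * v) = \<xi> * (w / v)" for w v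
    by (metis divide_divide_eq_left times_divide_eq_right mult.commute mult_1)
  define z where "z = csqrt (x - x0)"
  have z: "z \<in> ball 0 d" "x0 + z\<^sup>2 = x" using root[OF x] by (simp_all add: z_def)
  have "G2 x = Y2 z - b z / deriv F2 x" using shear_along_square_curveD(2)[OF S2 z(1)] z(2) by simp
  also have "\<dots> = \<xi> * (Y1 z - b z / deriv F1 x)"
    using Y21[OF z(1)] dFX div_\<xi> by (simp add: right_diff_distrib)
  also have "\<dots> = \<xi> * G1 x" using shear_along_square_curveD(2)[OF S1 z(1)] z(2) by simp
  finally show ?thesis using FX[OF x] dFX div_\<xi> by (simp add: distrib_left)
qed

lemma root_of_unity_mult_of_square_mult_deriv_eq:
  fixes Y1 Y2 :: "complex \<Rightarrow> complex"
  assumes "\<delta> > 0" and hY1: "Y1 holomorphic_on ball 0 \<delta>" and hY2: "Y2 holomorphic_on ball 0 \<delta>"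
    and "Y1 0 = 0" "Y2 0 = 0" "deriv Y1 0 \<noteq> 0"
    and eq: "\<And>z. z \<in> ball 0 \<delta> \<Longrightarrow> (Y1 z)\<^sup>2 * deriv Y1 z = (Y2 z)\<^sup>2 * deriv Y2 z"
  obtains \<xi> d where "\<xi> ^ 3 = 1" "0 < d" "d \<le> \<delta>" "\<And>z. z \<in> ball 0 d \<Longrightarrow> Y2 z = \<xi> * Y1 z"
proof -
  have "\<exists>c. \<forall>z\<in>ball 0 \<delta>. (Y1 z)^3 - (Y2 z)^3 = c"
  proof (rule has_field_derivative_zero_constant)
    fix z assume z: "z \<in> ball (0::complex) \<delta>"
    have "((\<lambda>z. (Y1 z)^3 - (Y2 z)^3) has_field_derivative
        3 * ((Y1 z)\<^sup>2 * deriv Y1 z) - 3 * ((Y2 z)\<^sup>2 * deriv Y2 z)) (at z)"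
      using holomorphic_derivI[OF hY1 open_ball z] holomorphic_derivI[OF hY2 open_ball z]
      by (auto intro!: derivative_eq_intros simp: algebra_simps)
    then show "((\<lambda>z. (Y1 z)^3 - (Y2 z)^3) has_field_derivative 0) (at z within ball 0 \<delta>)"
      using eq[OF z] by (auto intro: has_field_derivative_at_within)
  qed simp
  then obtain c where c: "\<And>z. z \<in> ball 0 \<delta> \<Longrightarrow> (Y1 z)^3 - (Y2 z)^3 = c" by blast
  have "c = 0" using c[of 0] assms(1,4,5) by simp
  then have cube: "(Y2 z)^3 = (Y1 z)^3" if "z \<in> ball 0 \<delta>" for z using c[OF that] by simp
  have "eventually (\<lambda>z. Y1 z \<noteq> 0) (at 0)"
    using holomorphic_derivI[OF hY1 open_ball, of 0] assms(1,4,6)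
    by (intro eventually_nonzero_at_of_deriv) auto
  then obtain d0 where "0 < d0" and d0: "\<And>z. z \<noteq> 0 \<Longrightarrow> dist z 0 < d0 \<Longrightarrow> Y1 z \<noteq> 0"
    unfolding eventually_at by auto
  define d where "d = min d0 \<delta>"
  have d: "0 < d" "d \<le> \<delta>" "\<And>z. z \<in> ball 0 d - {0} \<Longrightarrow> Y1 z \<noteq> 0"
    using \<open>0 < d0\<close> assms(1) d0 by (auto simp: d_def dist_commute)
  have cont: "continuous_on (ball 0 d - {0}) Y" if "Y holomorphic_on ball 0 \<delta>" for Y
    by (rule continuous_on_subset[OF holomorphic_on_imp_continuous_on[OF that]]) (use d(2) in auto)
  obtain \<xi> where \<xi>: "\<xi> ^ 3 = 1" "\<And>z. z \<in> ball 0 d - {0} \<Longrightarrow> Y2 z = \<xi> * Y1 z"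
  proof (rule power_eq_imp_root_of_unity_mult[OF _ _ cont[OF hY1] cont[OF hY2]])
    show "connected (ball (0::complex) d - {0})" by (rule connected_punctured_ball) simp
    have "complex_of_real (d / 2) \<in> ball 0 d - {0}" using d(1) by simp
    then show "ball (0::complex) d - {0} \<noteq> {}" by blast
    show "(Y2 z)^3 = (Y1 z)^3" if "z \<in> ball 0 d - {0}" for z using cube that d(2) by auto
  qed (use d(3) in auto)
  show ?thesis
  proof (rule that[OF \<xi>(1) d(1,2)])
    show "Y2 z = \<xi> * Y1 z" if "z \<in> ball 0 d" for z
      using \<xi>(2)[of z] that assms(4,5) by (cases "z = 0") auto
  qed
qed

lemma shear_along_square_curve_unique:
  assumes S1: "shear_along_square_curve x0 b \<delta> F1 G1 Y1" and S2: "shear_along_square_curve x0 b \<delta> F2 G2 Y2"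
  obtains \<xi> d where "\<xi> ^ 3 = 1" "0 < d" "d \<le> \<delta>"
    "\<And>x y. x \<in> ball x0 (d\<^sup>2) \<Longrightarrow>
       (F2 x, y / deriv F2 x + G2 x) = (\<xi>\<^sup>2 * F1 x, \<xi> * (y / deriv F1 x + G1 x))"
proof -
  obtain d1 where d1: "0 < d1" "d1 \<le> \<delta>" and dY1: "deriv Y1 0 \<noteq> 0"
    and odd1: "\<And>z. z \<in> ball 0 d1 \<Longrightarrow> (Y1 z)\<^sup>2 * deriv Y1 z = z * ((b z - b (-z)) / 2)"
    by (rule shear_along_square_curve_odd_part[OF S1]) (rule that)
  obtain d2 where d2: "0 < d2" "d2 \<le> \<delta>"
    and odd2: "\<And>z. z \<in> ball 0 d2 \<Longrightarrow> (Y2 z)\<^sup>2 * deriv Y2 z = z * ((b z - b (-z)) / 2)"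
    by (rule shear_along_square_curve_odd_part[OF S2]) (rule that)
  define d' where "d' = min d1 d2"
  have "0 < d'" "d' \<le> \<delta>" using d1 d2 by (auto simp: d'_def)
  then have S1': "shear_along_square_curve x0 b d' F1 G1 Y1"
    and S2': "shear_along_square_curve x0 b d' F2 G2 Y2"
    using S1 S2 shear_along_square_curve_mono by blast+
  obtain \<xi> d where \<xi>: "\<xi> ^ 3 = 1" and d: "0 < d" "d \<le> d'"
    and Y21: "\<And>z. z \<in> ball 0 d \<Longrightarrow> Y2 z = \<xi> * Y1 z"
  proof (rule root_of_unity_mult_of_square_mult_deriv_eq[of d' Y1 Y2])
    show "(Y1 z)\<^sup>2 * deriv Y1 z = (Y2 z)\<^sup>2 * deriv Y2 z" if "z \<in> ball 0 d'" for z
    proof -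
      have "z \<in> ball 0 d1" "z \<in> ball 0 d2" using that by (auto simp: d'_def)
      then show ?thesis using odd1 odd2 by (metis (no_types))
    qed
  qed (use that S1' S2' dY1 in \<open>auto simp: shear_along_square_curve_def\<close>)
  show ?thesis
  proof (rule that[OF \<xi> d(1)])
    show "d \<le> \<delta>" using d(2) \<open>d' \<le> \<delta>\<close> by simp
    show "(F2 x, y / deriv F2 x + G2 x) = (\<xi>\<^sup>2 * F1 x, \<xi> * (y / deriv F1 x + G1 x))"
      if "x \<in> ball x0 (d\<^sup>2)" for x y
      by (rule shear_along_square_curve_transition[OF shear_along_square_curve_mono[OF S1' d]
            shear_along_square_curve_mono[OF S2' d] \<xi> Y21 that])
  qed
qed

section \<open>Charts adapted to the vertical foliation\<close>

lemma holo2_has_field_derivative_comp: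
  assumes "holo2 f V" "(a t, b t) \<in> V" "(a has_field_derivative a') (at t)"
    "(b has_field_derivative b') (at t)"
  shows "((\<lambda>z. f (a z, b z)) has_field_derivative frechet_derivative f (at (a t, b t)) (a', b')) (at t)"
proof -
  obtain D where hD: "(f has_derivative D) (at (a t, b t))"
    and lin: "\<And>(c::complex) v. D (c * fst v, c * snd v) = c * D v"
    using assms(1,2) unfolding holo2_def by blast
  have D: "D = frechet_derivative f (at (a t, b t))" using frechet_derivative_at[OF hD] .
  have "((\<lambda>z. (a z, b z)) has_derivative (\<lambda>h. (a' * h, b' * h))) (at t)"
    using has_derivative_Pair[OF assms(3,4)[THEN has_field_derivative_imp_has_derivative]] .
  from diff_chain_at[OF this hD]
  have "((\<lambda>z. f (a z, b z)) has_derivative (\<lambda>h. D (a' * h, b' * h))) (at t)"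
    by (simp add: o_def)
  moreover have "(\<lambda>h. D (a' * h, b' * h)) = (\<lambda>h. D (a', b') * h)"
    using lin[of _ "(a', b')"] by (auto simp: mult.commute)
  ultimately show ?thesis unfolding has_field_derivative_def D by simp
qed

lemma holo2_comp_holomorphic:
  assumes "holo2 f V" "open S" "a holomorphic_on S" "b holomorphic_on S"
    "\<And>z. z \<in> S \<Longrightarrow> (a z, b z) \<in> V"
  shows "(\<lambda>z. f (a z, b z)) holomorphic_on S"
  unfolding holomorphic_on_open[OF assms(2)]
  using holo2_has_field_derivative_comp[OF assms(1) assms(5)
      holomorphic_derivI[OF assms(3,2)] holomorphic_derivI[OF assms(4,2)]] by blast

lemma open_contains_ball_times_ball:
  assumes "open V" "(x0, y0) \<in> V"
  obtains \<rho> where "\<rho> > 0" "ball x0 \<rho> \<times> ball y0 \<rho> \<subseteq> V"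
proof -
  obtain A B where AB: "open A" "open B" "x0 \<in> A" "y0 \<in> B" "A \<times> B \<subseteq> V"
    using assms by (rule open_prod_elim) auto
  obtain \<rho>A where "\<rho>A > 0" "ball x0 \<rho>A \<subseteq> A" using AB(1,3) openE by blast
  obtain \<rho>B where "\<rho>B > 0" "ball y0 \<rho>B \<subseteq> B" using AB(2,4) openE by blast
  have "ball x0 (min \<rho>A \<rho>B) \<subseteq> A" "ball y0 (min \<rho>A \<rho>B) \<subseteq> B"
    using \<open>ball x0 \<rho>A \<subseteq> A\<close> \<open>ball y0 \<rho>B \<subseteq> B\<close> by auto
  then show ?thesis using that[of "min \<rho>A \<rho>B"] \<open>\<rho>A > 0\<close> \<open>\<rho>B > 0\<close> AB(5) by fastforce
qed

lemma holo2_has_field_derivative_partial: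
  assumes "holo2 f V" "(x, y) \<in> V"
  shows "((\<lambda>z. f (z, y)) has_field_derivative pd1 f (x, y)) (at x)"
    and "((\<lambda>z. f (x, z)) has_field_derivative pd2 f (x, y)) (at y)"
  using holo2_has_field_derivative_comp[OF assms(1), of "\<lambda>z. z" x "\<lambda>z. y" 1 0]
    holo2_has_field_derivative_comp[OF assms(1), of "\<lambda>z. x" y "\<lambda>z. z" 0 1] assms(2)
  by (auto simp: pd1_def pd2_def)

lemma holo2_affine_of_pd2:
  assumes f: "holo2 f V" and seg: "{x} \<times> ball y0 \<rho> \<subseteq> V"
    and pd2: "\<And>z. z \<in> ball y0 \<rho> \<Longrightarrow> pd2 f (x, z) = c" and y: "y \<in> ball y0 \<rho>"
  shows "f (x, y) = f (x, y0) + (y - y0) * c"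
proof -
  have "\<exists>k. \<forall>z\<in>ball y0 \<rho>. f (x, z) - z * c = k"
  proof (rule has_field_derivative_zero_constant)
    fix z assume z: "z \<in> ball y0 \<rho>"
    then have "(x, z) \<in> V" using seg by blast
    then have "((\<lambda>z. f (x, z) - z * c) has_field_derivative pd2 f (x, z) - c) (at z)"
      using holo2_has_field_derivative_partial(2)[OF f] by (auto intro!: derivative_eq_intros)
    then show "((\<lambda>z. f (x, z) - z * c) has_field_derivative 0) (at z within ball y0 \<rho>)"
      using pd2[OF z] by (auto intro: has_field_derivative_at_within)
  qed simp
  then obtain k where "\<forall>z\<in>ball y0 \<rho>. f (x, z) - z * c = k" ..
  moreover have "0 < \<rho>" using y zero_le_dist[of y0 y] by (simp only: mem_ball)
  then have "y0 \<in> ball y0 \<rho>" by simp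
  ultimately have "f (x, y) - y * c = f (x, y0) - y0 * c" using y by simp
  then show ?thesis by (simp add: algebra_simps)
qed

lemma FO_chart_local_form:
  assumes "FO_chart V \<phi>" "(x0, y0) \<in> V"
  obtains \<rho> F G where "\<rho> > 0" "ball x0 \<rho> \<times> ball y0 \<rho> \<subseteq> V" "F holomorphic_on ball x0 \<rho>"
    "\<And>x. x \<in> ball x0 \<rho> \<Longrightarrow> deriv F x \<noteq> 0"
    "\<And>x y. x \<in> ball x0 \<rho> \<Longrightarrow> y \<in> ball y0 \<rho> \<Longrightarrow> \<phi> (x, y) = (F x, y / deriv F x + G x)"
proof -
  define X where "X = fst \<circ> \<phi>"
  define Y where "Y = snd \<circ> \<phi>"
  have hX: "holo2 X V" and hY: "holo2 Y V"
    and pd: "\<And>p. p \<in> V \<Longrightarrow> pd2 X p = 0 \<and> pd1 X p * pd2 Y p - pd2 X p * pd1 Y p = 1"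
    using assms(1) unfolding FO_chart_def X_def Y_def by auto
  have "open V" using assms(1) by (simp add: FO_chart_def)
  then obtain \<rho> where \<rho>: "\<rho> > 0" and box: "ball x0 \<rho> \<times> ball y0 \<rho> \<subseteq> V"
    using assms(2) by (rule open_contains_ball_times_ball)
  have in_V: "(x, y) \<in> V" if "x \<in> ball x0 \<rho>" "y \<in> ball y0 \<rho>" for x y using box that by blast
  have seg: "{x} \<times> ball y0 \<rho> \<subseteq> V" if "x \<in> ball x0 \<rho>" for x using in_V that by blast
  have y0: "y0 \<in> ball y0 \<rho>" using \<rho> by simp
  define F where "F x = X (x, y0)" for x
  have X_F: "X (x, y) = F x" if "x \<in> ball x0 \<rho>" "y \<in> ball y0 \<rho>" for x y
    using holo2_affine_of_pd2[OF hX seg[OF that(1)] _ that(2), of 0] pd in_V that(1) by (simp add: F_def)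
  have dF: "(F has_field_derivative pd1 X (x, y)) (at x)" if "x \<in> ball x0 \<rho>" "y \<in> ball y0 \<rho>" for x y
    by (rule has_field_derivative_transform_within_open[OF
          holo2_has_field_derivative_partial(1)[OF hX in_V[OF that]] open_ball that(1)])
       (use that(2) X_F in auto)
  have hF: "F holomorphic_on ball x0 \<rho>" using dF y0 holomorphic_on_open[OF open_ball] by blast
  have det: "deriv F x * pd2 Y (x, y) = 1" if "x \<in> ball x0 \<rho>" "y \<in> ball y0 \<rho>" for x y
    using pd[OF in_V[OF that]] DERIV_imp_deriv[OF dF[OF that]] by auto
  define G where "G x = Y (x, y0) - y0 / deriv F x" for x
  have Y_G: "Y (x, y) = y / deriv F x + G x" if "x \<in> ball x0 \<rho>" "y \<in> ball y0 \<rho>" for x y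
  proof -
    have pdY: "pd2 Y (x, z) = 1 / deriv F x" if "z \<in> ball y0 \<rho>" for z
    proof -
      have "deriv F x * pd2 Y (x, z) = 1" using det[OF \<open>x \<in> ball x0 \<rho>\<close> that] .
      moreover from this have "deriv F x \<noteq> 0" by auto
      ultimately show ?thesis by (simp add: field_simps)
    qed
    have "Y (x, y) = Y (x, y0) + (y - y0) * (1 / deriv F x)"
      by (rule holo2_affine_of_pd2[OF hY seg[OF that(1)] pdY that(2)])
    then show ?thesis by (simp add: G_def diff_divide_distrib)
  qed
  show ?thesis
  proof (rule that[OF \<rho> box hF])
    show "deriv F x \<noteq> 0" if "x \<in> ball x0 \<rho>" for x using det[OF that y0] by auto
    show "\<phi> (x, y) = (F x, y / deriv F x + G x)" if "x \<in> ball x0 \<rho>" "y \<in> ball y0 \<rho>" for x y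
      using X_F[OF that] Y_G[OF that] by (simp add: X_def Y_def prod_eq_iff)
  qed
qed

lemma holo2_affine_in_snd:
  fixes A B :: "complex \<Rightarrow> complex"
  assumes S: "open S" and hA: "A holomorphic_on S" and hB: "B holomorphic_on S"
    and V: "open V" "fst ` V \<subseteq> S"
  defines "f \<equiv> \<lambda>p. A (fst p) + snd p * B (fst p)"
  shows "holo2 f V" "continuous_on V f"
    and "\<And>p. p \<in> V \<Longrightarrow> pd1 f p = deriv A (fst p) + snd p * deriv B (fst p)"
    and "\<And>p. p \<in> V \<Longrightarrow> pd2 f p = B (fst p)"
proof -
  define D where "D p v = deriv A (fst p) * fst v + (snd p * (deriv B (fst p) * fst v) + snd v * B (fst p))"
    for p v
  have hD: "(f has_derivative D p) (at p)" if p: "p \<in> V" for p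
  proof -
    have "fst p \<in> S" using p V by auto
    then have dA: "(A has_field_derivative deriv A (fst p)) (at (fst p))"
      and dB: "(B has_field_derivative deriv B (fst p)) (at (fst p))"
      using holomorphic_derivI[OF hA S] holomorphic_derivI[OF hB S] by auto
    have fst': "(fst has_derivative fst) (at p)" and snd': "(snd has_derivative snd) (at p)"
      by (rule has_derivative_fst[OF has_derivative_ident] has_derivative_snd[OF has_derivative_ident])+
    have "((\<lambda>q. A (fst q)) has_derivative (\<lambda>v. deriv A (fst p) * fst v)) (at p)"
      "((\<lambda>q. B (fst q)) has_derivative (\<lambda>v. deriv B (fst p) * fst v)) (at p)"
      using diff_chain_at[OF fst' has_field_derivative_imp_has_derivative[OF dA]]
        diff_chain_at[OF fst' has_field_derivative_imp_has_derivative[OF dB]] by (simp_all add: o_def)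
    then show ?thesis
      unfolding f_def D_def by (intro has_derivative_add has_derivative_mult snd')
  qed
  have fd: "frechet_derivative f (at p) = D p" if "p \<in> V" for p
    using frechet_derivative_at[OF hD[OF that]] by simp
  have "D p (c * fst v, c * snd v) = c * D p v" for p c v by (simp add: D_def algebra_simps)
  then show "holo2 f V" unfolding holo2_def using V(1) hD by blast
  show "continuous_on V f"
    using hD has_derivative_continuous continuous_at_imp_continuous_on by blast
  show "pd1 f p = deriv A (fst p) + snd p * deriv B (fst p)" if "p \<in> V" for p
    by (simp add: pd1_def fd[OF that] D_def)
  show "pd2 f p = B (fst p)" if "p \<in> V" for p
    by (simp add: pd2_def fd[OF that] D_def)
qed

lemma FO_chart_shear:
  assumes S: "open S" and dF: "\<And>x. x \<in> S \<Longrightarrow> (F has_field_derivative F' x) (at x)"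
    and nz: "\<And>x. x \<in> S \<Longrightarrow> F' x \<noteq> 0" and hG: "G holomorphic_on S" and inj: "inj_on F S"
    and V: "open V" "fst ` V \<subseteq> S"
  shows "FO_chart V (\<lambda>p. (F (fst p), snd p / F' (fst p) + G (fst p)))"
    (is "FO_chart V ?\<phi>")
proof -
  have hF: "F holomorphic_on S" using dF holomorphic_on_open[OF S] by blast
  have deriv_F: "deriv F x = F' x" if "x \<in> S" for x using dF[OF that] by (rule DERIV_imp_deriv)
  have "(\<lambda>x. 1 / deriv F x) holomorphic_on S"
    using holomorphic_deriv[OF hF S] nz deriv_F by (auto intro!: holomorphic_intros)
  then have "(\<lambda>x. 1 / F' x) holomorphic_on S" by (rule holomorphic_transform) (simp add: deriv_F)
  note Y = holo2_affine_in_snd[OF S hG this V]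
  have "(\<lambda>x. 0) holomorphic_on S" by simp
  note X = holo2_affine_in_snd[OF S hF this V]
  have X_eq: "fst \<circ> ?\<phi> = (\<lambda>p. F (fst p) + snd p * 0)"
    and Y_eq: "snd \<circ> ?\<phi> = (\<lambda>p. G (fst p) + snd p * (1 / F' (fst p)))"
    by (auto simp: o_def)
  have inj_\<phi>: "inj_on ?\<phi> V"
  proof (rule inj_onI)
    fix p q assume p: "p \<in> V" and q: "q \<in> V" and eq: "?\<phi> p = ?\<phi> q"
    then have "fst p = fst q" using inj V(2) by (auto dest: inj_onD)
    moreover have "F' (fst p) \<noteq> 0" using nz p V(2) by auto
    ultimately show "p = q" using eq by (auto simp: prod_eq_iff)
  qed
  have "continuous_on V ?\<phi>"
    using continuous_on_Pair[OF X(2) Y(2)] by (simp add: add.commute)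
  then have "open (?\<phi> ` V)" using invariance_of_domain V(1) inj_\<phi> by blast
  moreover have "pd2 (fst \<circ> ?\<phi>) p = 0"
    "pd1 (fst \<circ> ?\<phi>) p * pd2 (snd \<circ> ?\<phi>) p - pd2 (fst \<circ> ?\<phi>) p * pd1 (snd \<circ> ?\<phi>) p = 1"
    if "p \<in> V" for p
    using X(3,4)[OF that] Y(4)[OF that] nz[of "fst p"] deriv_F[of "fst p"] V(2) that
    unfolding X_eq Y_eq by auto
  ultimately show ?thesis
    unfolding FO_chart_def using V(1) X(1) Y(1) inj_\<phi> by (simp add: X_eq Y_eq)
qed

section \<open>Normal charts at a ramification point\<close>

locale ramified_curve =
  fixes U0 \<Sigma> :: "(complex \<times> complex) set" and r :: "complex \<times> complex"
    and \<beta> :: "complex \<Rightarrow> complex" and \<epsilon> :: real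
  assumes open_U0: "open U0" and r_in_U0: "r \<in> U0" and \<epsilon>_pos: "\<epsilon> > 0"
    and holomorphic_\<beta>: "\<beta> holomorphic_on ball 0 \<epsilon>" and \<beta>_0: "\<beta> 0 = snd r"
    and deriv_\<beta>_0: "deriv \<beta> 0 \<noteq> 0"
    and \<Sigma>_curve: "\<Sigma> \<inter> U0 = (\<lambda>z. (fst r + z\<^sup>2, \<beta> z)) ` ball 0 \<epsilon>"
begin

(* The last clause says that the shear built from F and G, in the variable t = x - fst r, maps the
   curve onto {X = Y^2}. *)
lemma straightening_functions:
  obtains \<eta> F G where "\<eta> > 0" "F holomorphic_on ball 0 \<eta>" "G holomorphic_on ball 0 \<eta>"
    "inj_on F (ball 0 \<eta>)" "\<And>t. t \<in> ball 0 \<eta> \<Longrightarrow> deriv F t \<noteq> 0" "F 0 = 0"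
    "snd r / deriv F 0 + G 0 = 0"
    "\<And>t y. t \<in> ball 0 \<eta> \<Longrightarrow>
       F t = (y / deriv F t + G t)\<^sup>2 \<longleftrightarrow> (\<exists>z\<in>ball 0 \<epsilon>. z\<^sup>2 = t \<and> y = \<beta> z)"
proof -
  obtain e d where he: "e holomorphic_on ball 0 (\<epsilon>\<^sup>2)" and hd: "d holomorphic_on ball 0 (\<epsilon>\<^sup>2)"
    and \<beta>_eq: "\<And>z. z \<in> ball 0 \<epsilon> \<Longrightarrow> \<beta> z = e (z\<^sup>2) + z * d (z\<^sup>2)" and d0: "d 0 = deriv \<beta> 0"
    by (rule holomorphic_even_odd_decomposition[OF holomorphic_\<beta> \<epsilon>_pos]) (rule that)
  obtain \<eta> F where \<eta>: "\<eta> > 0" "\<eta> \<le> \<epsilon>\<^sup>2" and hF: "F holomorphic_on ball 0 \<eta>" and F0: "F 0 = 0"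
    and inj: "inj_on F (ball 0 \<eta>)" and dF: "\<And>t. t \<in> ball 0 \<eta> \<Longrightarrow> deriv F t \<noteq> 0"
    and F_ode: "\<And>t. t \<in> ball 0 \<eta> \<Longrightarrow> F t * (deriv F t)\<^sup>2 = t * (d t)\<^sup>2"
    by (rule square_ode_local_biholomorphic_solution[OF hd \<epsilon>_pos]) (use d0 deriv_\<beta>_0 in simp, rule that)
  define G where "G t = - e t / deriv F t" for t
  have hG: "G holomorphic_on ball 0 \<eta>"
  proof -
    have "ball 0 \<eta> \<subseteq> ball (0::complex) (\<epsilon>\<^sup>2)" using \<eta>(2) by auto
    then have "e holomorphic_on ball 0 \<eta>" using he holomorphic_on_subset by blast
    then show ?thesis
      unfolding G_def using holomorphic_deriv[OF hF open_ball] dF by (auto intro!: holomorphic_intros)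
  qed
  have root_in_ball: "z \<in> ball 0 \<epsilon>" if "z\<^sup>2 \<in> ball 0 \<eta>" for z :: complex
    using that \<eta>(2) \<epsilon>_pos power_less_imp_less_base[of "norm z" 2 \<epsilon>] by (simp add: norm_power)
  have F_square: "F (z\<^sup>2) = (z * d (z\<^sup>2) / deriv F (z\<^sup>2))\<^sup>2" if "z\<^sup>2 \<in> ball 0 \<eta>" for z :: complex
    using F_ode[OF that] dF[OF that] by (simp add: field_simps power2_eq_square)
  have Y_curve: "\<beta> z / deriv F (z\<^sup>2) + G (z\<^sup>2) = z * d (z\<^sup>2) / deriv F (z\<^sup>2)"
    if "z\<^sup>2 \<in> ball 0 \<eta>" for z :: complex
    using \<beta>_eq[OF root_in_ball[OF that]] by (simp add: G_def add_divide_distrib)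
  show ?thesis
  proof (rule that[OF \<eta>(1) hF hG inj dF F0])
    show "snd r / deriv F 0 + G 0 = 0"
      using \<beta>_eq[of 0] \<epsilon>_pos \<beta>_0 by (simp add: G_def)
    fix t y :: complex assume t: "t \<in> ball 0 \<eta>"
    show "F t = (y / deriv F t + G t)\<^sup>2 \<longleftrightarrow> (\<exists>z\<in>ball 0 \<epsilon>. z\<^sup>2 = t \<and> y = \<beta> z)"
    proof
      assume "F t = (y / deriv F t + G t)\<^sup>2"
      moreover have "(csqrt t)\<^sup>2 \<in> ball 0 \<eta>" using t by simp
      ultimately have "y / deriv F t + G t = csqrt t * d t / deriv F t \<or>
          y / deriv F t + G t = - csqrt t * d t / deriv F t"
        using F_square[of "csqrt t"] by (simp add: power2_eq_iff)
      then obtain z where z: "z\<^sup>2 = t" "y / deriv F t + G t = z * d t / deriv F t"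
        by (metis power2_csqrt power2_minus)
      then have "y / deriv F t + G t = \<beta> z / deriv F t + G t" using Y_curve[of z] t by simp
      then have "y = \<beta> z" using dF[OF t] by simp
      then show "\<exists>z\<in>ball 0 \<epsilon>. z\<^sup>2 = t \<and> y = \<beta> z" using z(1) root_in_ball t by blast
    next
      assume "\<exists>z\<in>ball 0 \<epsilon>. z\<^sup>2 = t \<and> y = \<beta> z"
      then obtain z where "z\<^sup>2 = t" "y = \<beta> z" by blast
      then show "F t = (y / deriv F t + G t)\<^sup>2" using F_square[of z] Y_curve[of z] t by simp
    qed
  qed
qed

lemma normal_chart_exists: "\<exists>V \<phi>. normal_chart U0 \<Sigma> r V \<phi>"
proof -
  obtain \<eta> F G where \<eta>: "\<eta> > 0" and hF: "F holomorphic_on ball 0 \<eta>"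
    and hG: "G holomorphic_on ball 0 \<eta>" and inj: "inj_on F (ball 0 \<eta>)"
    and dF: "\<And>t. t \<in> ball 0 \<eta> \<Longrightarrow> deriv F t \<noteq> 0" and F0: "F 0 = 0"
    and G0: "snd r / deriv F 0 + G 0 = 0"
    and curve: "\<And>t y. t \<in> ball 0 \<eta> \<Longrightarrow>
       F t = (y / deriv F t + G t)\<^sup>2 \<longleftrightarrow> (\<exists>z\<in>ball 0 \<epsilon>. z\<^sup>2 = t \<and> y = \<beta> z)"
    by (rule straightening_functions) (rule that)
  obtain x0 y0 where r: "r = (x0, y0)" by fastforce
  obtain \<rho>0 where \<rho>0: "\<rho>0 > 0" "ball x0 \<rho>0 \<times> ball y0 \<rho>0 \<subseteq> U0"
    using open_contains_ball_times_ball[OF open_U0] r_in_U0 r by blast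
  define V where "V = ball x0 (min \<rho>0 \<eta>) \<times> ball y0 (min \<rho>0 \<eta>)"
  define S where "S = ball x0 \<eta>"
  define \<phi> where "\<phi> p = (F (fst p - x0), snd p / deriv F (fst p - x0) + G (fst p - x0))" for p
  have shift: "x - x0 \<in> ball 0 \<eta>" if "x \<in> S" for x
    using that by (simp add: S_def dist_norm norm_minus_commute)
  have VU: "V \<subseteq> U0" using \<rho>0(2) by (auto simp: V_def)
  have VS: "fst ` V \<subseteq> S" by (auto simp: V_def S_def)
  have "FO_chart V (\<lambda>p. (F (fst p - x0), snd p / deriv F (fst p - x0) + G (fst p - x0)))"
  proof (rule FO_chart_shear[OF _ _ _ _ _ _ VS])
    show "open S" "open V" by (simp_all add: S_def V_def open_Times)
    show "((\<lambda>x. F (x - x0)) has_field_derivative deriv F (x - x0)) (at x)" if "x \<in> S" for x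
      using holomorphic_derivI[OF hF open_ball shift[OF that], of UNIV]
        DERIV_shift[of F "deriv F (x - x0)" x "- x0"] by simp
    show "deriv F (x - x0) \<noteq> 0" if "x \<in> S" for x using dF shift that by blast
    have "(G \<circ> (\<lambda>x. x - x0)) holomorphic_on S"
      by (rule holomorphic_on_compose_gen[OF _ hG]) (auto intro: holomorphic_intros shift)
    then show "(\<lambda>x. G (x - x0)) holomorphic_on S" by (simp add: o_def)
    show "inj_on (\<lambda>x. F (x - x0)) S"
      by (rule inj_onI) (use inj shift in \<open>auto dest: inj_onD\<close>)
  qed
  then have FO: "FO_chart V \<phi>" by (simp add: \<phi>_def[abs_def])
  have \<Sigma>_V: "p \<in> \<Sigma> \<longleftrightarrow> fst (\<phi> p) = (snd (\<phi> p))\<^sup>2" if "p \<in> V" for p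
  proof -
    obtain x y where p: "p = (x, y)" by fastforce
    then have "x \<in> S" using VS that by force
    have "p \<in> \<Sigma> \<longleftrightarrow> p \<in> \<Sigma> \<inter> U0" using VU that by blast
    also have "\<dots> \<longleftrightarrow> (\<exists>z\<in>ball 0 \<epsilon>. x = x0 + z\<^sup>2 \<and> y = \<beta> z)"
      unfolding \<Sigma>_curve by (auto simp: p r)
    also have "\<dots> \<longleftrightarrow> (\<exists>z\<in>ball 0 \<epsilon>. z\<^sup>2 = x - x0 \<and> y = \<beta> z)" by (auto simp: algebra_simps)
    also have "\<dots> \<longleftrightarrow> fst (\<phi> p) = (snd (\<phi> p))\<^sup>2"
      using curve[OF shift[OF \<open>x \<in> S\<close>]] by (simp add: \<phi>_def p)
    finally show ?thesis .
  qed
  have "normal_chart U0 \<Sigma> r V \<phi>"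
    unfolding normal_chart_def using VU FO \<Sigma>_V \<rho>0(1) \<eta> F0 G0 by (auto simp: V_def \<phi>_def r)
  then show ?thesis by blast
qed

lemma normal_chart_along_curve:
  assumes nc: "normal_chart U0 \<Sigma> r V \<phi>" and Y_def: "Y = (\<lambda>z. snd (\<phi> (fst r + z\<^sup>2, \<beta> z)))"
  obtains \<rho> F G \<delta> where "\<rho> > 0" "ball (fst r) \<rho> \<times> ball (snd r) \<rho> \<subseteq> V"
    "\<And>x y. x \<in> ball (fst r) \<rho> \<Longrightarrow> y \<in> ball (snd r) \<rho> \<Longrightarrow> \<phi> (x, y) = (F x, y / deriv F x + G x)"
    "\<delta>\<^sup>2 \<le> \<rho>" "shear_along_square_curve (fst r) \<beta> \<delta> F G Y"
proof -
  have rV: "r \<in> V" and FO: "FO_chart V \<phi>" and \<phi>r: "\<phi> r = (0, 0)"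
    and \<Sigma>_V: "\<And>p. p \<in> V \<Longrightarrow> p \<in> \<Sigma> \<longleftrightarrow> fst (\<phi> p) = (snd (\<phi> p))\<^sup>2"
    using nc unfolding normal_chart_def by auto
  obtain \<rho> F G where \<rho>: "\<rho> > 0" and box: "ball (fst r) \<rho> \<times> ball (snd r) \<rho> \<subseteq> V"
    and hF: "F holomorphic_on ball (fst r) \<rho>" and dF: "\<And>x. x \<in> ball (fst r) \<rho> \<Longrightarrow> deriv F x \<noteq> 0"
    and \<phi>_eq: "\<And>x y. x \<in> ball (fst r) \<rho> \<Longrightarrow> y \<in> ball (snd r) \<rho> \<Longrightarrow>
      \<phi> (x, y) = (F x, y / deriv F x + G x)"
    using FO_chart_local_form[OF FO, of "fst r" "snd r"] rV by auto
  have "isCont \<beta> 0" using holomorphic_\<beta> \<epsilon>_pos by (rule isCont_centre_of_holomorphic_on_ball)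
  then obtain d where d: "d > 0" "\<And>z. dist z 0 < d \<Longrightarrow> dist (\<beta> z) (snd r) < \<rho>"
    using \<rho> \<beta>_0 unfolding continuous_at_eps_delta by (metis dist_commute)
  define \<delta> where "\<delta> = min (min d \<epsilon>) (sqrt \<rho>)"
  have "\<delta> > 0" "\<delta> \<le> sqrt \<rho>" using d(1) \<epsilon>_pos \<rho> by (auto simp: \<delta>_def)
  then have \<delta>: "\<delta> > 0" "\<delta>\<^sup>2 \<le> \<rho>" using power_mono[of \<delta> "sqrt \<rho>" 2] \<rho> by auto
  then have ball_\<delta>: "ball (fst r) (\<delta>\<^sup>2) \<subseteq> ball (fst r) \<rho>" by auto
  have in_\<epsilon>: "z \<in> ball 0 \<epsilon>" if "z \<in> ball 0 \<delta>" for z using that by (simp add: \<delta>_def)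
  have in_box: "(fst r + z\<^sup>2, \<beta> z) \<in> ball (fst r) \<rho> \<times> ball (snd r) \<rho>" if "z \<in> ball 0 \<delta>" for z
  proof -
    have "fst r + z\<^sup>2 \<in> ball (fst r) \<rho>" using translate_power2_in_ball[OF that] ball_\<delta> by blast
    moreover have "\<beta> z \<in> ball (snd r) \<rho>" using d(2)[of z] that by (simp add: \<delta>_def dist_commute)
    ultimately show ?thesis by simp
  qed
  have Y_eq: "Y z = \<beta> z / deriv F (fst r + z\<^sup>2) + G (fst r + z\<^sup>2)"
    and X_eq: "F (fst r + z\<^sup>2) = (Y z)\<^sup>2" if "z \<in> ball 0 \<delta>" for z
  proof -
    have "(fst r + z\<^sup>2, \<beta> z) \<in> \<Sigma>" using \<Sigma>_curve in_\<epsilon>[OF that] by blast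
    moreover have "(fst r + z\<^sup>2, \<beta> z) \<in> V" using box in_box[OF that] by blast
    ultimately have "fst (\<phi> (fst r + z\<^sup>2, \<beta> z)) = (Y z)\<^sup>2" using \<Sigma>_V by (simp add: Y_def)
    then show "F (fst r + z\<^sup>2) = (Y z)\<^sup>2" "Y z = \<beta> z / deriv F (fst r + z\<^sup>2) + G (fst r + z\<^sup>2)"
      using in_box[OF that] \<phi>_eq[of "fst r + z\<^sup>2" "\<beta> z"] by (auto simp: Y_def)
  qed
  have "holo2 (snd \<circ> \<phi>) V" using FO by (simp add: FO_chart_def)
  moreover have "\<beta> holomorphic_on ball 0 \<delta>"
    using holomorphic_\<beta> by (rule holomorphic_on_subset) (use in_\<epsilon> in blast)
  ultimately have hY: "Y holomorphic_on ball 0 \<delta>"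
    unfolding Y_def using box in_box
    by (intro holo2_comp_holomorphic[of "snd \<circ> \<phi>", simplified]) (auto intro!: holomorphic_intros)
  have "Y 0 = 0" using \<phi>r \<beta>_0 by (simp add: Y_def)
  then have "shear_along_square_curve (fst r) \<beta> \<delta> F G Y"
    unfolding shear_along_square_curve_def
    using \<delta>(1) holomorphic_on_subset[OF hF ball_\<delta>] dF ball_\<delta> hY X_eq Y_eq by blast
  then show ?thesis using that \<rho> box \<phi>_eq \<delta>(2) by blast
qed

lemma normal_chart_unique:
  assumes nc1: "normal_chart U0 \<Sigma> r V \<phi>" and nc2: "normal_chart U0 \<Sigma> r V' \<psi>"
  obtains \<xi> W where "\<xi> ^ 3 = 1" "open W" "r \<in> W" "W \<subseteq> V \<inter> V'"
    "\<And>p. p \<in> W \<Longrightarrow> \<psi> p = (\<xi>\<^sup>2 * fst (\<phi> p), \<xi> * snd (\<phi> p))"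
proof -
  obtain \<rho>1 F1 G1 \<delta>1 where \<rho>1: "\<rho>1 > 0" and box1: "ball (fst r) \<rho>1 \<times> ball (snd r) \<rho>1 \<subseteq> V"
    and \<phi>_eq: "\<And>x y. x \<in> ball (fst r) \<rho>1 \<Longrightarrow> y \<in> ball (snd r) \<rho>1 \<Longrightarrow>
      \<phi> (x, y) = (F1 x, y / deriv F1 x + G1 x)"
    and \<delta>1: "\<delta>1\<^sup>2 \<le> \<rho>1" and S1: "shear_along_square_curve (fst r) \<beta> \<delta>1 F1 G1 (\<lambda>z. snd (\<phi> (fst r + z\<^sup>2, \<beta> z)))"
    by (rule normal_chart_along_curve[OF nc1 refl]) (rule that)
  obtain \<rho>2 F2 G2 \<delta>2 where \<rho>2: "\<rho>2 > 0" and box2: "ball (fst r) \<rho>2 \<times> ball (snd r) \<rho>2 \<subseteq> V'"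
    and \<psi>_eq: "\<And>x y. x \<in> ball (fst r) \<rho>2 \<Longrightarrow> y \<in> ball (snd r) \<rho>2 \<Longrightarrow>
      \<psi> (x, y) = (F2 x, y / deriv F2 x + G2 x)"
    and \<delta>2: "\<delta>2\<^sup>2 \<le> \<rho>2" and S2: "shear_along_square_curve (fst r) \<beta> \<delta>2 F2 G2 (\<lambda>z. snd (\<psi> (fst r + z\<^sup>2, \<beta> z)))"
    by (rule normal_chart_along_curve[OF nc2 refl]) (rule that)
  have "0 < min \<delta>1 \<delta>2" using S1 S2 by (simp add: shear_along_square_curve_def)
  then obtain \<xi> d where \<xi>: "\<xi> ^ 3 = 1" and d: "0 < d" "d \<le> min \<delta>1 \<delta>2"
    and rel: "\<And>x y. x \<in> ball (fst r) (d\<^sup>2) \<Longrightarrow>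
      (F2 x, y / deriv F2 x + G2 x) = (\<xi>\<^sup>2 * F1 x, \<xi> * (y / deriv F1 x + G1 x))"
    using shear_along_square_curve_unique[OF shear_along_square_curve_mono[OF S1]
        shear_along_square_curve_mono[OF S2]] by (metis min.cobounded1 min.cobounded2)
  have "d\<^sup>2 \<le> \<delta>1\<^sup>2" "d\<^sup>2 \<le> \<delta>2\<^sup>2" using d by (auto intro!: power_mono)
  then have "d\<^sup>2 \<le> \<rho>1" "d\<^sup>2 \<le> \<rho>2" using \<delta>1 \<delta>2 by auto
  define W where "W = ball (fst r) (d\<^sup>2) \<times> ball (snd r) (min \<rho>1 \<rho>2)"
  have W: "x \<in> ball (fst r) (d\<^sup>2)" "x \<in> ball (fst r) \<rho>1" "x \<in> ball (fst r) \<rho>2"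
    "y \<in> ball (snd r) \<rho>1" "y \<in> ball (snd r) \<rho>2" if "(x, y) \<in> W" for x y
    using that \<open>d\<^sup>2 \<le> \<rho>1\<close> \<open>d\<^sup>2 \<le> \<rho>2\<close> by (auto simp: W_def)
  show ?thesis
  proof (rule that[OF \<xi>])
    show "open W" by (simp add: W_def open_Times)
    show "r \<in> W" using d(1) \<rho>1 \<rho>2 by (simp add: W_def mem_Times_iff)
    show "W \<subseteq> V \<inter> V'" using box1 box2 W by fastforce
    fix p assume "p \<in> W"
    then obtain x y where p: "p = (x, y)" "(x, y) \<in> W" by (cases p) auto
    show "\<psi> p = (\<xi>\<^sup>2 * fst (\<phi> p), \<xi> * snd (\<phi> p))"
      using \<psi>_eq[OF W(3,5)[OF p(2)]] \<phi>_eq[OF W(2,4)[OF p(2)]] rel[OF W(1)[OF p(2)], of y] p(1)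
      by simp
  qed
qed

end

theorem lemma2p6:
  fixes U0 \<Sigma> :: "(complex \<times> complex) set" and r :: "complex \<times> complex"
    and \<beta> :: "complex \<Rightarrow> complex" and \<epsilon> :: real
  assumes "open U0" and "r \<in> U0" and "\<epsilon> > 0"
    and "\<beta> holomorphic_on ball 0 \<epsilon>" and "\<beta> 0 = snd r" and "deriv \<beta> 0 \<noteq> 0"
    and "(\<lambda>z. (fst r + z^2, \<beta> z)) ` ball 0 \<epsilon> \<subseteq> U0"
    and "\<Sigma> \<inter> U0 = (\<lambda>z. (fst r + z^2, \<beta> z)) ` ball 0 \<epsilon>"
  shows "(\<exists>V \<phi>. normal_chart U0 \<Sigma> r V \<phi>) \<and>
    (\<forall>V \<phi> V' \<psi>. normal_chart U0 \<Sigma> r V \<phi> \<longrightarrow> normal_chart U0 \<Sigma> r V' \<psi> \<longrightarrow>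
       (\<exists>\<xi>::complex. \<xi>^3 = 1 \<and>
          (\<exists>W. open W \<and> r \<in> W \<and> W \<subseteq> V \<inter> V' \<and>
             (\<forall>p\<in>W. \<psi> p = (\<xi>^2 * fst (\<phi> p), \<xi> * snd (\<phi> p))))))"
proof -
  interpret ramified_curve U0 \<Sigma> r \<beta> \<epsilon>
    using assms(1-6,8) by unfold_locales
  show ?thesis
  proof (intro conjI allI impI)
    show "\<exists>V \<phi>. normal_chart U0 \<Sigma> r V \<phi>" by (rule normal_chart_exists)
    fix V \<phi> V' \<psi>
    assume "normal_chart U0 \<Sigma> r V \<phi>" "normal_chart U0 \<Sigma> r V' \<psi>"
    then show "\<exists>\<xi>::complex. \<xi>^3 = 1 \<and>
          (\<exists>W. open W \<and> r \<in> W \<and> W \<subseteq> V \<inter> V' \<and>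
             (\<forall>p\<in>W. \<psi> p = (\<xi>^2 * fst (\<phi> p), \<xi> * snd (\<phi> p))))"
      by (rule normal_chart_unique) blast
  qed
qed

end
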